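(* Let $h>0$ and let $\gamma=(\gamma^\tau,\gamma^\omega):[0,1]\to\mathbb{R}^{1+d}$ satisfy the Brownian-like scaling assumption described in the context. Then for every multi-index $\alpha\in\mathcal{A}$, $$\mathbb{E}\big[\|I^\gamma_\alpha(1)\|^2\big]=O\big(h^{2\,\mathrm{ord}(\alpha)}\big).$$
   Context: Brownian-like scaling assumption: $\gamma$ depends on the step size $h>0$; it is a continuous piecewise linear path with a fixed number $m\in\mathbb{N}$ of linear pieces, vertices $0=r_0<\dots<r_m=1$, and almost surely finite length; writing $\gamma_{r_i,r_{i+1}}=\gamma(r_{i+1})-\gamma(r_i)$, (1) the increments $\gamma^\tau_{r_i,r_{i+1}}$ are deterministic; (2) $\gamma^\tau_{r_i,r_{i+1}}=O(h)$ and for every $j\in\{1,\dots,d\}$ and $k\in\mathbb{N}$, $\mathbb{E}[|(\gamma^\omega_{r_i,r_{i+1}})_j|^{2k}]=O(h^k)$. $O(h^q)$ means bounded by a constant independent of $h$ times $h^q$ for all sufficiently small $h$. Multi-indices: $\mathcal{A}=\bigcup_{n\ge0}\{\tau,\omega\}^n$; for $\alpha=(\alpha_1,\dots,\alpha_n)$, $|\alpha|_\tau$ and $|\alpha|_\omega$ are the numbers of entries equal to $\tau$ and $\omega$, and $\mathrm{ord}(\alpha)=|\alpha|_\tau+\tfrac12|\alpha|_\omega$. The iterated integral $I^\gamma_\alpha(1)\in(\mathbb{R}^d)^{\otimes|\alpha|_\omega}$ is $$I^\gamma_\alpha(1)=\int_0^1\int_0^{r_1}\cdots\int_0^{r_{n-1}}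 d\gamma^{\alpha_1}(r_n)\,d\gamma^{\alpha_2}(r_{n-1})\cdots d\gamma^{\alpha_n}(r_1),$$ where a $\tau$-entry contributes the scalar differential $d\gamma^\tau$ and an $\omega$-entry contributes a tensor factor $d\gamma^\omega\in\mathbb{R}^d$ (the tensor factors taken in the order of the entries); integrals are Riemann–Stieltjes; $I^\gamma_{\emptyset}(1)=1$. *)

theory Defs
  imports "HOL-Probability.Probability"
begin

datatype letter = Tau | Omega

definition count_tau :: "letter list \<Rightarrow> nat" where
  "count_tau \<alpha> = length (filter (\<lambda>a. a = Tau) \<alpha>)"

definition count_omega :: "letter list \<Rightarrow> nat" where
  "count_omega \<alpha> = length (filter (\<lambda>a. a = Omega) \<alpha>)"

text \<open>Scalar coordinate of the path (gt, gw): None is the time coordinate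
  \<gamma>^\<tau>, Some j is the j-th coordinate of \<gamma>^\<omega>.\<close>
definition coord :: "(real \<Rightarrow> real) \<Rightarrow> (real \<Rightarrow> real^'d) \<Rightarrow> 'd option \<Rightarrow> real \<Rightarrow> real" where
  "coord gt gw c s = (case c of None \<Rightarrow> gt s | Some j \<Rightarrow> gw s $ j)"

text \<open>Riemann--Stieltjes integral of f against the (piecewise linear, hence
  a.e. differentiable) integrator g over [0,t], written as \<integral> f g'.\<close>
definition rs_integral :: "(real \<Rightarrow> real) \<Rightarrow> (real \<Rightarrow> real) \<Rightarrow> real \<Rightarrow> real" where
  "rs_integral f g t = integral {0..t} (\<lambda>s. f s * vector_derivative g (at s))"

text \<open>Scalar iterated integral; the word is given REVERSED (outermost letter
  first): iint [c_n,...,c_1] t = \<integral>_0^t iint [c_{n-1},...,c_1] s d\<gamma>^{c_n}(s).\<close>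
fun iint :: "(real \<Rightarrow> real) \<Rightarrow> (real \<Rightarrow> real^'d) \<Rightarrow> 'd option list \<Rightarrow> real \<Rightarrow> real" where
  "iint gt gw [] t = 1"
| "iint gt gw (c # cs) t = rs_integral (\<lambda>s. iint gt gw cs s) (coord gt gw c) t"

fun merge_word :: "letter list \<Rightarrow> 'd list \<Rightarrow> 'd option list" where
  "merge_word [] js = []"
| "merge_word (Tau # a) js = None # merge_word a js"
| "merge_word (Omega # a) (j # js) = Some j # merge_word a js"
| "merge_word (Omega # a) [] = []"

text \<open>Component (j_1,...,j_k) of the tensor I_\<alpha>(1) in (R^d)^{\<otimes>k}.\<close>
definition iterated_integral_comp ::
  "(real \<Rightarrow> real) \<Rightarrow> (real \<Rightarrow> real^'d) \<Rightarrow> letter list \<Rightarrow> 'd list \<Rightarrow> real" where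
  "iterated_integral_comp gt gw \<alpha> js = iint gt gw (rev (merge_word \<alpha> js)) 1"

text \<open>Squared (Euclidean / Hilbert--Schmidt) norm of the tensor I_\<alpha>(1).\<close>
definition iterated_integral_norm2 ::
  "(real \<Rightarrow> real) \<Rightarrow> (real \<Rightarrow> real^'d::finite) \<Rightarrow> letter list \<Rightarrow> real" where
  "iterated_integral_norm2 gt gw \<alpha> =
     (\<Sum>js\<in>{js :: 'd list. length js = count_omega \<alpha>}. (iterated_integral_comp gt gw \<alpha> js)\<^sup>2)"

end

theory Submission
  imports Defs
begin

(* Riemann-Stieltjes integration against a piecewise linear integrator g multiplies the
   sup norm of the integrand by at most the variation of g along the partition, because |g'|
   is dominated by a step function whose integral is that variation.  By induction over the
   word, every component of I_alpha(1) is therefore bounded pathwise by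
   V^|alpha|_tau * W^|alpha|_omega, where V is the variation of gamma^tau, which is O(h)
   uniformly in the sample, and W is the sum of all |increments| of all coordinates of
   gamma^omega.  Squaring and using W^(2k) <= (d m)^(2k) * sum |increment|^(2k) with
   k = |alpha|_omega, the moment assumption gives E ||I_alpha(1)||^2 = O(h^(2|alpha|_tau + k)). *)

lemma abs_integral_le_integral:
  fixes f :: "'n::euclidean_space \<Rightarrow> real"
  assumes "G integrable_on S" "\<And>s. s \<in> S \<Longrightarrow> \<bar>f s\<bar> \<le> G s"
  shows "\<bar>integral S f\<bar> \<le> integral S G"
proof (cases "f integrable_on S")
  case True
  have "norm (integral S f) \<le> integral S G"
    by (rule integral_norm_bound_integral[OF True assms(1)]) (simp add: assms(2))
  then show ?thesis
    by simp
next
  case False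
  have "0 \<le> integral S G"
    using assms by (intro integral_nonneg) (auto intro: order.trans[OF abs_ge_zero])
  then show ?thesis
    using False by (simp add: not_integrable_integral)
qed

lemma prod_list_le_power:
  fixes f :: "'b \<Rightarrow> 'a::linordered_semidom"
  assumes "\<And>x. 0 \<le> f x" "\<And>x. f x \<le> W"
  shows "(\<Prod>x\<leftarrow>xs. f x) \<le> W ^ length xs"
  by (induction xs) (auto intro!: mult_mono assms order.trans[OF assms] prod_list_nonneg)

lemma sum_power_le_card_power_mult_sum:
  fixes a :: "'b \<Rightarrow> real"
  assumes "finite K" "K \<noteq> {}" "\<And>k. k \<in> K \<Longrightarrow> 0 \<le> a k"
  shows "(\<Sum>k\<in>K. a k) ^ p \<le> real (card K) ^ p * (\<Sum>k\<in>K. a k ^ p)"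
proof -
  have "Max (a ` K) \<in> a ` K"
    using assms(1,2) by (intro Max_in) auto
  then obtain k0 where "k0 \<in> K" and k0: "a k0 = Max (a ` K)"
    by auto
  have "(\<Sum>k\<in>K. a k) \<le> real (card K) * a k0"
    using sum_bounded_above[of K a "a k0"] assms(1) k0 by simp
  then have "(\<Sum>k\<in>K. a k) ^ p \<le> (real (card K) * a k0) ^ p"
    by (intro power_mono) (simp_all add: assms(3) sum_nonneg)
  also have "\<dots> = real (card K) ^ p * a k0 ^ p"
    by (simp add: power_mult_distrib)
  also have "\<dots> \<le> real (card K) ^ p * (\<Sum>k\<in>K. a k ^ p)"
    using \<open>k0 \<in> K\<close> assms by (intro mult_left_mono member_le_sum) simp_all
  finally show ?thesis .
qed

lemma eventually_at_right_0_uniform_constant: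
  fixes P :: "'i \<Rightarrow> real \<Rightarrow> real \<Rightarrow> bool"
  assumes "finite I"
    and "\<And>i. i \<in> I \<Longrightarrow> \<exists>C. \<forall>\<^sub>F h in at_right 0. P i C h"
    and "\<And>i C C' h. C \<le> C' \<Longrightarrow> 0 < h \<Longrightarrow> P i C h \<Longrightarrow> P i C' h"
  shows "\<exists>C\<ge>0. \<forall>\<^sub>F h in at_right 0. \<forall>i\<in>I. P i C h"
proof -
  obtain C where C: "\<And>i. i \<in> I \<Longrightarrow> \<forall>\<^sub>F h in at_right 0. P i (C i) h"
    using assms(2) by metis
  define C0 where "C0 = (\<Sum>i\<in>I. max 0 (C i))"
  have "0 \<le> C0"
    unfolding C0_def by (simp add: sum_nonneg)
  have "C i \<le> C0" if "i \<in> I" for i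
    using member_le_sum[of i I "\<lambda>i. max 0 (C i)"] assms(1) that unfolding C0_def by simp
  have "\<forall>\<^sub>F h in at_right 0. \<forall>i\<in>I. P i (C i) h"
    using C assms(1) by (simp add: eventually_ball_finite_distrib)
  moreover have "\<forall>\<^sub>F h in at_right (0::real). 0 < h"
    by (rule eventually_at_right_less)
  ultimately have "\<forall>\<^sub>F h in at_right 0. \<forall>i\<in>I. P i C0 h"
    by eventually_elim (use assms(3) \<open>\<And>i. i \<in> I \<Longrightarrow> C i \<le> C0\<close> in blast)
  with \<open>0 \<le> C0\<close> show ?thesis
    by blast
qed

lemma eventually_at_right_0_uniform_linear_bound:
  fixes f :: "'i \<Rightarrow> real \<Rightarrow> 'x \<Rightarrow> real"
  assumes "finite I" "\<And>i. i \<in> I \<Longrightarrow> \<exists>C. \<forall>\<^sub>F h in at_right 0. \<forall>x\<in>X. f i h x \<le> C * h"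
  shows "\<exists>C\<ge>0. \<forall>\<^sub>F h in at_right 0. \<forall>i\<in>I. \<forall>x\<in>X. f i h x \<le> C * h"
  using assms(2) by (rule eventually_at_right_0_uniform_constant[OF assms(1)])
    (auto elim!: order.trans intro!: mult_right_mono)

lemma eventually_at_right_0_uniform_power_bound:
  fixes F :: "'i \<Rightarrow> real \<Rightarrow> ennreal"
  assumes "finite I" "\<And>i. i \<in> I \<Longrightarrow> \<exists>C. \<forall>\<^sub>F h in at_right 0. F i h \<le> ennreal (C * h ^ k)"
  shows "\<exists>C\<ge>0. \<forall>\<^sub>F h in at_right 0. \<forall>i\<in>I. F i h \<le> ennreal (C * h ^ k)"
  using assms(2)
proof (rule eventually_at_right_0_uniform_constant[OF assms(1)])
  fix i C C' and h :: real
  assume "C \<le> C'" "0 < h" "F i h \<le> ennreal (C * h ^ k)"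
  note \<open>F i h \<le> ennreal (C * h ^ k)\<close>
  also have "ennreal (C * h ^ k) \<le> ennreal (C' * h ^ k)"
    using \<open>C \<le> C'\<close> \<open>0 < h\<close> by (intro ennreal_leI mult_right_mono) simp_all
  finally show "F i h \<le> ennreal (C' * h ^ k)" .
qed

definition partition01 :: "(nat \<Rightarrow> real) \<Rightarrow> nat \<Rightarrow> bool" where
  "partition01 r m \<longleftrightarrow> r 0 = 0 \<and> r m = 1 \<and> (\<forall>i<m. r i < r (Suc i))"

definition piecewise_linear :: "(nat \<Rightarrow> real) \<Rightarrow> nat \<Rightarrow> (real \<Rightarrow> 'b::real_vector) \<Rightarrow> bool" where
  "piecewise_linear r m g \<longleftrightarrow> (\<forall>i<m. \<forall>s\<in>{r i..r (Suc i)}.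
     g s = g (r i) + ((s - r i) / (r (Suc i) - r i)) *\<^sub>R (g (r (Suc i)) - g (r i)))"

definition partition_variation :: "(nat \<Rightarrow> real) \<Rightarrow> nat \<Rightarrow> (real \<Rightarrow> real) \<Rightarrow> real" where
  "partition_variation r m g = (\<Sum>i<m. \<bar>g (r (Suc i)) - g (r i)\<bar>)"

definition slope_envelope :: "(nat \<Rightarrow> real) \<Rightarrow> nat \<Rightarrow> (real \<Rightarrow> real) \<Rightarrow> real \<Rightarrow> real" where
  "slope_envelope r m g s =
     (\<Sum>i<m. if s \<in> {r i..r (Suc i)} then \<bar>g (r (Suc i)) - g (r i)\<bar> / (r (Suc i) - r i) else 0)"

lemma partition01_mono:
  assumes "partition01 r m" "i \<le> k" "k \<le> m"
  shows "r i \<le> r k"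
  using assms(2,3)
proof (induction k)
  case (Suc k)
  show ?case
  proof (cases "i = Suc k")
    case False
    then have "r i \<le> r k"
      using Suc by simp
    also have "r k < r (Suc k)"
      using assms(1) Suc.prems unfolding partition01_def by simp
    finally show ?thesis
      by simp
  qed simp
qed simp

lemma partition01_in_unit:
  assumes "partition01 r m" "i \<le> m"
  shows "r i \<in> {0..1}"
  using partition01_mono[OF assms(1), of 0 i] partition01_mono[OF assms(1), of i m] assms
  unfolding partition01_def by auto

lemma partition01_locate:
  assumes "partition01 r m" "s \<in> {0..1}" "s \<notin> r ` {..m}"
  obtains i where "i < m" "r i < s" "s < r (Suc i)"
proof -
  define A where "A = {i. i \<le> m \<and> r i < s}"
  have "finite A" "0 \<in> A"
    using assms unfolding A_def partition01_def by (auto simp: order_le_less)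
  define i where "i = Max A"
  have "i \<in> A"
    unfolding i_def using \<open>finite A\<close> \<open>0 \<in> A\<close> by (intro Max_in) auto
  have "Suc i \<notin> A"
    using Max_ge[OF \<open>finite A\<close>, of "Suc i"] unfolding i_def by auto
  have "i \<noteq> m"
    using \<open>i \<in> A\<close> assms unfolding A_def partition01_def by auto
  then have "i < m" "r i < s"
    using \<open>i \<in> A\<close> unfolding A_def by auto
  moreover have "s \<le> r (Suc i)"
    using \<open>Suc i \<notin> A\<close> \<open>i < m\<close> unfolding A_def by auto
  moreover have "r (Suc i) \<noteq> s"
    using assms(3) \<open>i < m\<close> by force
  ultimately show thesis
    using that by auto
qed

lemma piecewise_linearD:
  "piecewise_linear r m g \<Longrightarrow> i < m \<Longrightarrow> s \<in> {r i..r (Suc i)} \<Longrightarrow>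
     g s = g (r i) + ((s - r i) / (r (Suc i) - r i)) *\<^sub>R (g (r (Suc i)) - g (r i))"
  unfolding piecewise_linear_def by blast

lemma coord_None [simp]: "coord gt gw None = gt"
  by (simp add: fun_eq_iff coord_def)

lemma coord_Some [simp]: "coord gt gw (Some j) = (\<lambda>s. gw s $ j)"
  by (simp add: fun_eq_iff coord_def)

lemma piecewise_linear_vec_nth:
  assumes "piecewise_linear r m g"
  shows "piecewise_linear r m (\<lambda>s. g s $ j)"
  unfolding piecewise_linear_def
proof (intro allI impI ballI)
  fix i s
  assume "i < m" "s \<in> {r i..r (Suc i)}"
  then have "g s = g (r i) + ((s - r i) / (r (Suc i) - r i)) *\<^sub>R (g (r (Suc i)) - g (r i))"
    by (rule piecewise_linearD[OF assms])
  then show "g s $ j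
      = g (r i) $ j + ((s - r i) / (r (Suc i) - r i)) *\<^sub>R (g (r (Suc i)) $ j - g (r i) $ j)"
    by simp
qed

lemma piecewise_linear_coord:
  "piecewise_linear r m gt \<Longrightarrow> piecewise_linear r m gw \<Longrightarrow> piecewise_linear r m (coord gt gw c)"
  by (cases c) (simp_all add: piecewise_linear_vec_nth)

lemma vector_derivative_piecewise_linear:
  fixes g :: "real \<Rightarrow> 'b::real_normed_vector"
  assumes "piecewise_linear r m g" "i < m" "r i < s" "s < r (Suc i)"
  shows "vector_derivative g (at s) = (1 / (r (Suc i) - r i)) *\<^sub>R (g (r (Suc i)) - g (r i))"
proof -
  let ?L = "\<lambda>y. g (r i) + ((y - r i) / (r (Suc i) - r i)) *\<^sub>R (g (r (Suc i)) - g (r i))"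
  have "(?L has_vector_derivative (1 / (r (Suc i) - r i)) *\<^sub>R (g (r (Suc i)) - g (r i))) (at s)"
    by (auto intro!: derivative_eq_intros simp: divide_inverse)
  moreover have "s \<in> {r i<..<r (Suc i)}"
    using assms(3,4) by simp
  moreover have "?L y = g y" if "y \<in> {r i<..<r (Suc i)}" for y
    using piecewise_linearD[OF assms(1,2), of y] that by simp
  ultimately have
    "(g has_vector_derivative (1 / (r (Suc i) - r i)) *\<^sub>R (g (r (Suc i)) - g (r i))) (at s)"
    by (rule has_vector_derivative_transform_within_open[OF _ open_greaterThanLessThan])
  then show ?thesis
    by (rule vector_derivative_at)
qed

lemma slope_envelope_nonneg:
  "partition01 r m \<Longrightarrow> 0 \<le> slope_envelope r m g s"
  unfolding slope_envelope_def partition01_def by (auto intro!: sum_nonneg)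

lemma slope_envelope_integrable: "slope_envelope r m g integrable_on {a..b}"
  unfolding slope_envelope_def
  by (intro integrable_sum finite_lessThan)
     (simp add: integrable_restrict_Int Henstock_Kurzweil_Integration.integrable_const_ivl
        del: atLeastAtMost_iff)

lemma integral_slope_envelope:
  assumes "partition01 r m"
  shows "integral {0..1} (slope_envelope r m g) = partition_variation r m g"
proof -
  have "integral {0..1}
          (\<lambda>s. if s \<in> {r i..r (Suc i)} then \<bar>g (r (Suc i)) - g (r i)\<bar> / (r (Suc i) - r i) else 0)
        = \<bar>g (r (Suc i)) - g (r i)\<bar>" if "i < m" for i
  proof -
    have "{r i..r (Suc i)} \<inter> {0..1} = {r i..r (Suc i)}" and "r i < r (Suc i)"
      using partition01_in_unit[OF assms, of i] partition01_in_unit[OF assms, of "Suc i"] assms that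
      by (auto simp: partition01_def)
    then show ?thesis
      by (simp only: Henstock_Kurzweil_Integration.integral_restrict_Int) simp
  qed
  moreover have "(\<lambda>s. if s \<in> {r i..r (Suc i)} then c else 0) integrable_on {0..1}"
    for i and c :: real
    by (simp add: integrable_restrict_Int Henstock_Kurzweil_Integration.integrable_const_ivl
        del: atLeastAtMost_iff)
  ultimately show ?thesis
    unfolding slope_envelope_def partition_variation_def
    by (simp add: integral_sum)
qed

lemma abs_vector_derivative_le_slope_envelope:
  fixes g :: "real \<Rightarrow> real"
  assumes "partition01 r m" "piecewise_linear r m g" "s \<in> {0..1}" "s \<notin> r ` {..m}"
  shows "\<bar>vector_derivative g (at s)\<bar> \<le> slope_envelope r m g s"
proof -
  obtain i where i: "i < m" "r i < s" "s < r (Suc i)"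
    using partition01_locate[OF assms(1,3,4)] .
  have "\<bar>vector_derivative g (at s)\<bar> = \<bar>g (r (Suc i)) - g (r i)\<bar> / (r (Suc i) - r i)"
    using vector_derivative_piecewise_linear[OF assms(2) i] i by simp
  also have "\<dots> \<le> slope_envelope r m g s"
    unfolding slope_envelope_def using i assms(1)
    by (intro member_le_sum[where i = i, THEN order.trans[rotated]]) (auto simp: partition01_def)
  finally show ?thesis .
qed

lemma partition_variation_nonneg: "0 \<le> partition_variation r m g"
  unfolding partition_variation_def by (simp add: sum_nonneg)

lemma abs_rs_integral_le:
  assumes "partition01 r m" "piecewise_linear r m g"
    and "\<And>s. s \<in> {0..1} \<Longrightarrow> \<bar>F s\<bar> \<le> B" and "t \<le> 1"
  shows "\<bar>rs_integral F g t\<bar> \<le> B * partition_variation r m g"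
proof -
  have "0 \<le> B"
    using assms(3)[of 0] by simp
  \<comment> \<open>At the vertices the derivative is a junk value; they form a null set.\<close>
  define f where "f s = (if s \<in> r ` {..m} then 0 else F s * vector_derivative g (at s))" for s
  have "rs_integral F g t = integral {0..t} f"
    unfolding rs_integral_def f_def by (rule integral_spike[of "r ` {..m}"]) auto
  also have "\<bar>\<dots>\<bar> \<le> integral {0..t} (\<lambda>s. B * slope_envelope r m g s)"
  proof (rule abs_integral_le_integral)
    show "(\<lambda>s. B * slope_envelope r m g s) integrable_on {0..t}"
      using integrable_on_cmult_left[OF slope_envelope_integrable] by simp
  next
    fix s
    assume "s \<in> {0..t}"
    show "\<bar>f s\<bar> \<le> B * slope_envelope r m g s"
    proof (cases "s \<in> r ` {..m}")
      case True
      then show ?thesis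
        unfolding f_def using \<open>0 \<le> B\<close> slope_envelope_nonneg[OF assms(1)] by simp
    next
      case False
      then have "\<bar>F s\<bar> * \<bar>vector_derivative g (at s)\<bar> \<le> B * slope_envelope r m g s"
        using \<open>s \<in> {0..t}\<close> \<open>0 \<le> B\<close> assms
        by (intro mult_mono abs_vector_derivative_le_slope_envelope) auto
      then show ?thesis
        unfolding f_def using False by (simp add: abs_mult)
    qed
  qed
  also have "\<dots> \<le> integral {0..1} (\<lambda>s. B * slope_envelope r m g s)"
    using assms(4) \<open>0 \<le> B\<close> slope_envelope_nonneg[OF assms(1)]
      integrable_on_cmult_left[OF slope_envelope_integrable]
    by (intro integral_subset_le) auto
  also have "\<dots> = B * partition_variation r m g"
    by (simp add: integral_slope_envelope[OF assms(1)])
  finally show ?thesis .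
qed

lemma abs_iint_le_prod_variation:
  assumes "partition01 r m" "piecewise_linear r m gt" "piecewise_linear r m gw" "t \<le> 1"
  shows "\<bar>iint gt gw cs t\<bar> \<le> (\<Prod>c\<leftarrow>cs. partition_variation r m (coord gt gw c))"
  using assms(4)
proof (induction cs arbitrary: t)
  case (Cons c cs)
  have "\<bar>rs_integral (iint gt gw cs) (coord gt gw c) t\<bar>
        \<le> (\<Prod>c\<leftarrow>cs. partition_variation r m (coord gt gw c))
             * partition_variation r m (coord gt gw c)"
    by (rule abs_rs_integral_le[OF assms(1) piecewise_linear_coord[OF assms(2,3)] _ Cons.prems])
       (simp add: Cons.IH)
  then show ?case
    by (simp add: mult.commute)
qed simp

lemma prod_list_map_merge_word:
  fixes V :: "'d option \<Rightarrow> 'a::comm_monoid_mult"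
  shows "length js = count_omega \<alpha> \<Longrightarrow>
     (\<Prod>c\<leftarrow>merge_word \<alpha> js. V c) = V None ^ count_tau \<alpha> * (\<Prod>j\<leftarrow>js. V (Some j))"
  by (induction \<alpha> js rule: merge_word.induct) (auto simp: count_tau_def count_omega_def mult_ac)

lemma abs_iterated_integral_comp_le:
  assumes "partition01 r m" "piecewise_linear r m gt" "piecewise_linear r m gw"
    and "length js = count_omega \<alpha>" and "\<And>j. partition_variation r m (\<lambda>s. gw s $ j) \<le> W"
  shows "\<bar>iterated_integral_comp gt gw \<alpha> js\<bar>
           \<le> partition_variation r m gt ^ count_tau \<alpha> * W ^ count_omega \<alpha>"
proof -
  have "\<bar>iterated_integral_comp gt gw \<alpha> js\<bar>
        \<le> (\<Prod>c\<leftarrow>merge_word \<alpha> js. partition_variation r m (coord gt gw c))"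
    using abs_iint_le_prod_variation[OF assms(1-3), of 1 "rev (merge_word \<alpha> js)"]
    unfolding iterated_integral_comp_def by (simp add: rev_map[symmetric])
  also have "\<dots> = partition_variation r m gt ^ count_tau \<alpha>
                   * (\<Prod>j\<leftarrow>js. partition_variation r m (\<lambda>s. gw s $ j))"
    using prod_list_map_merge_word[OF assms(4),
        where V = "\<lambda>c. partition_variation r m (coord gt gw c)"]
    by simp
  also have "\<dots> \<le> partition_variation r m gt ^ count_tau \<alpha> * W ^ count_omega \<alpha>"
    using prod_list_le_power[of "\<lambda>j. partition_variation r m (\<lambda>s. gw s $ j)" W js]
    by (intro mult_left_mono) (simp_all add: assms(4,5) partition_variation_nonneg)
  finally show ?thesis .
qed

lemma iterated_integral_norm2_le:
  fixes gw :: "real \<Rightarrow> real^'d::finite"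
  assumes "partition01 r m" "piecewise_linear r m gt" "piecewise_linear r m gw"
    and "\<And>j. partition_variation r m (\<lambda>s. gw s $ j) \<le> W"
  shows "iterated_integral_norm2 gt gw \<alpha>
           \<le> real CARD('d) ^ count_omega \<alpha>
              * (partition_variation r m gt ^ count_tau \<alpha> * W ^ count_omega \<alpha>)\<^sup>2"
proof -
  let ?JS = "{js :: 'd list. length js = count_omega \<alpha>}"
  let ?bound = "partition_variation r m gt ^ count_tau \<alpha> * W ^ count_omega \<alpha>"
  have "(iterated_integral_comp gt gw \<alpha> js)\<^sup>2 \<le> ?bound\<^sup>2" if "js \<in> ?JS" for js
  proof -
    have "\<bar>iterated_integral_comp gt gw \<alpha> js\<bar> \<le> ?bound"
      using that by (intro abs_iterated_integral_comp_le[OF assms(1-3) _ assms(4)]) simp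
    from power_mono[OF this abs_ge_zero, of 2] show ?thesis
      by simp
  qed
  then have "iterated_integral_norm2 gt gw \<alpha> \<le> real (card ?JS) * ?bound\<^sup>2"
    unfolding iterated_integral_norm2_def by (rule sum_bounded_above)
  moreover have "card ?JS = CARD('d) ^ count_omega \<alpha>"
    using card_lists_length_eq[of "UNIV :: 'd set"] by simp
  ultimately show ?thesis
    by simp
qed

lemma iterated_integral_norm2_le_increments:
  fixes gw :: "real \<Rightarrow> real^'d::finite"
  assumes "partition01 r m" "piecewise_linear r m gt" "piecewise_linear r m gw"
    and "partition_variation r m gt \<le> Vt"
  shows "iterated_integral_norm2 gt gw \<alpha>
           \<le> real CARD('d) ^ count_omega \<alpha> * Vt ^ (2 * count_tau \<alpha>)
              * real (CARD('d) * m) ^ (2 * count_omega \<alpha>)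
              * (\<Sum>p\<in>UNIV \<times> {..<m}.
                   \<bar>(gw (r (Suc (snd p))) - gw (r (snd p))) $ fst p\<bar> ^ (2 * count_omega \<alpha>))"
proof -
  let ?K = "(UNIV :: 'd set) \<times> {..<m}"
  let ?a = "\<lambda>p. \<bar>(gw (r (Suc (snd p))) - gw (r (snd p))) $ fst p\<bar>"
  let ?n = "count_omega \<alpha>" and ?nt = "count_tau \<alpha>"
  define W where "W = (\<Sum>p\<in>?K. ?a p)"
  have "m \<noteq> 0"
    using assms(1) unfolding partition01_def by (cases m) auto
  have "partition_variation r m (\<lambda>s. gw s $ j) \<le> W" for j
  proof -
    have "partition_variation r m (\<lambda>s. gw s $ j) = (\<Sum>i<m. ?a (j, i))"
      unfolding partition_variation_def by simp
    also have "\<dots> \<le> (\<Sum>j'\<in>UNIV. \<Sum>i<m. ?a (j', i))"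
      by (rule member_le_sum) (auto intro: sum_nonneg)
    also have "\<dots> = W"
      unfolding W_def by (simp add: sum.cartesian_product case_prod_beta)
    finally show ?thesis .
  qed
  then have "iterated_integral_norm2 gt gw \<alpha>
               \<le> real CARD('d) ^ ?n * (partition_variation r m gt ^ ?nt * W ^ ?n)\<^sup>2"
    by (rule iterated_integral_norm2_le[OF assms(1-3)])
  also have "\<dots> = real CARD('d) ^ ?n * partition_variation r m gt ^ (2 * ?nt) * W ^ (2 * ?n)"
    by (simp add: power_mult_distrib power_even_eq)
  also have "\<dots> \<le> real CARD('d) ^ ?n * Vt ^ (2 * ?nt) * W ^ (2 * ?n)"
    using assms(4) partition_variation_nonneg
    by (intro mult_right_mono mult_left_mono power_mono) (simp_all add: W_def sum_nonneg)
  also have "\<dots> \<le> real CARD('d) ^ ?n * Vt ^ (2 * ?nt)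
                      * (real (card ?K) ^ (2 * ?n) * (\<Sum>p\<in>?K. ?a p ^ (2 * ?n)))"
    using \<open>m \<noteq> 0\<close> assms(4) partition_variation_nonneg[of r m gt] unfolding W_def
    by (intro mult_left_mono sum_power_le_card_power_mult_sum) auto
  finally show ?thesis
    by (simp add: card_cartesian_product mult.assoc)
qed

lemma nn_integral_iterated_integral_norm2_le:
  fixes gt :: "'a \<Rightarrow> real \<Rightarrow> real" and gw :: "'a \<Rightarrow> real \<Rightarrow> real^'d::finite"
  assumes "partition01 r m"
    and "\<And>x. x \<in> space M \<Longrightarrow> piecewise_linear r m (gt x)"
    and "\<And>x. x \<in> space M \<Longrightarrow> piecewise_linear r m (gw x)"
    and "\<And>x. x \<in> space M \<Longrightarrow> partition_variation r m (gt x) \<le> Vt"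
    and "\<And>i. i \<le> m \<Longrightarrow> (\<lambda>x. gw x (r i)) \<in> borel_measurable M"
    and "\<And>i j. i < m \<Longrightarrow>
           (\<integral>\<^sup>+x. ennreal (\<bar>(gw x (r (Suc i)) - gw x (r i)) $ j\<bar> ^ (2 * count_omega \<alpha>)) \<partial>M)
             \<le> ennreal B"
    and "0 \<le> B"
  shows "(\<integral>\<^sup>+x. ennreal (iterated_integral_norm2 (gt x) (gw x) \<alpha>) \<partial>M)
           \<le> ennreal (real CARD('d) ^ count_omega \<alpha> * Vt ^ (2 * count_tau \<alpha>)
                * real (CARD('d) * m) ^ (2 * count_omega \<alpha>) * (real (CARD('d) * m) * B))"
proof -
  let ?K = "(UNIV :: 'd set) \<times> {..<m}"
  define A where "A = real CARD('d) ^ count_omega \<alpha> * Vt ^ (2 * count_tau \<alpha>)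
                        * real (CARD('d) * m) ^ (2 * count_omega \<alpha>)"
  define f where
    "f p x = \<bar>(gw x (r (Suc (snd p))) - gw x (r (snd p))) $ fst p\<bar> ^ (2 * count_omega \<alpha>)" for p x
  have "0 \<le> A"
    by (simp add: A_def power_mult)
  have f_nonneg: "0 \<le> f p x" for p x
    by (simp add: f_def)
  have f_measurable: "(\<lambda>x. ennreal (f p x)) \<in> borel_measurable M" if "p \<in> ?K" for p
  proof -
    have "(\<lambda>x. gw x (r (Suc (snd p))) - gw x (r (snd p))) \<in> borel_measurable M"
      using that assms(5) by (intro borel_measurable_diff) auto
    then have "(\<lambda>x. f p x) \<in> borel_measurable M"
      unfolding f_def
      by (intro borel_measurable_continuous_on[where f = "\<lambda>v. \<bar>v $ fst p\<bar> ^ (2 * count_omega \<alpha>)"])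
         (auto intro!: continuous_intros)
    then show ?thesis
      by simp
  qed
  have "(\<integral>\<^sup>+x. ennreal (iterated_integral_norm2 (gt x) (gw x) \<alpha>) \<partial>M)
        \<le> (\<integral>\<^sup>+x. ennreal A * (\<Sum>p\<in>?K. ennreal (f p x)) \<partial>M)"
  proof (rule nn_integral_mono)
    fix x
    assume "x \<in> space M"
    then have "iterated_integral_norm2 (gt x) (gw x) \<alpha> \<le> A * (\<Sum>p\<in>?K. f p x)"
      unfolding A_def f_def
      by (intro iterated_integral_norm2_le_increments[OF assms(1)] assms(2-4))
    then have "ennreal (iterated_integral_norm2 (gt x) (gw x) \<alpha>) \<le> ennreal (A * (\<Sum>p\<in>?K. f p x))"
      by (rule ennreal_leI)
    also have "\<dots> = ennreal A * (\<Sum>p\<in>?K. ennreal (f p x))"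
      using \<open>0 \<le> A\<close> by (simp add: ennreal_mult f_nonneg sum_nonneg sum_ennreal)
    finally show "ennreal (iterated_integral_norm2 (gt x) (gw x) \<alpha>)
                    \<le> ennreal A * (\<Sum>p\<in>?K. ennreal (f p x))" .
  qed
  also have "\<dots> = ennreal A * (\<Sum>p\<in>?K. \<integral>\<^sup>+x. ennreal (f p x) \<partial>M)"
    using f_measurable by (simp add: nn_integral_cmult nn_integral_sum borel_measurable_sum)
  also have "\<dots> \<le> ennreal A * (\<Sum>p\<in>?K. ennreal B)"
    using assms(6) by (intro mult_left_mono sum_mono) (auto simp: f_def)
  also have "\<dots> = ennreal (A * (real (CARD('d) * m) * B))"
    using \<open>0 \<le> A\<close> \<open>0 \<le> B\<close>
    by (simp add: card_cartesian_product ennreal_mult ennreal_of_nat_eq_real_of_nat)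
  finally show ?thesis
    unfolding A_def .
qed

lemma eventually_nn_integral_iterated_integral_norm2_le:
  fixes gt :: "real \<Rightarrow> 'a \<Rightarrow> real \<Rightarrow> real" and gw :: "real \<Rightarrow> 'a \<Rightarrow> real \<Rightarrow> real^'d::finite"
  assumes partition: "\<And>h. 0 < h \<Longrightarrow> partition01 (r h) m"
    and pl_t: "\<And>h x. 0 < h \<Longrightarrow> x \<in> space M \<Longrightarrow> piecewise_linear (r h) m (gt h x)"
    and pl_w: "\<And>h x. 0 < h \<Longrightarrow> x \<in> space M \<Longrightarrow> piecewise_linear (r h) m (gw h x)"
    and meas: "\<And>h i. 0 < h \<Longrightarrow> i \<le> m \<Longrightarrow> (\<lambda>x. gw h x (r h i)) \<in> borel_measurable M"
    and CT: "\<forall>\<^sub>F h in at_right 0. \<forall>i\<in>{..<m}. \<forall>x\<in>space M.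
               \<bar>gt h x (r h (Suc i)) - gt h x (r h i)\<bar> \<le> CT * h"
    and CW: "\<forall>\<^sub>F h in at_right 0. \<forall>p\<in>UNIV \<times> {..<m}.
               (\<integral>\<^sup>+x. ennreal (\<bar>(gw h x (r h (Suc (snd p))) - gw h x (r h (snd p))) $ fst p\<bar>
                                ^ (2 * count_omega \<alpha>)) \<partial>M)
                 \<le> ennreal (CW * h ^ count_omega \<alpha>)"
    and "0 \<le> CW"
  shows "\<exists>C. \<forall>\<^sub>F h in at_right 0. (\<integral>\<^sup>+x. ennreal (iterated_integral_norm2 (gt h x) (gw h x) \<alpha>) \<partial>M)
           \<le> ennreal (C * h ^ (2 * count_tau \<alpha> + count_omega \<alpha>))"
proof
  let ?n = "count_omega \<alpha>" and ?nt = "count_tau \<alpha>"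
  define C where "C = real CARD('d) ^ ?n * (real m * CT) ^ (2 * ?nt)
                        * real (CARD('d) * m) ^ (2 * ?n) * (real (CARD('d) * m) * CW)"
  show "\<forall>\<^sub>F h in at_right 0. (\<integral>\<^sup>+x. ennreal (iterated_integral_norm2 (gt h x) (gw h x) \<alpha>) \<partial>M)
          \<le> ennreal (C * h ^ (2 * ?nt + ?n))"
    using CT CW eventually_at_right_less[of "0::real"]
  proof eventually_elim
    case (elim h)
    have "partition_variation (r h) m (gt h x) \<le> real m * CT * h" if "x \<in> space M" for x
      using sum_bounded_above[of "{..<m}" _ "CT * h"] elim(1) that
      unfolding partition_variation_def by (simp add: mult.assoc)
    then have "(\<integral>\<^sup>+x. ennreal (iterated_integral_norm2 (gt h x) (gw h x) \<alpha>) \<partial>M)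
          \<le> ennreal (real CARD('d) ^ ?n * (real m * CT * h) ^ (2 * ?nt)
                * real (CARD('d) * m) ^ (2 * ?n) * (real (CARD('d) * m) * (CW * h ^ ?n)))"
      using elim \<open>0 \<le> CW\<close>
      by (intro nn_integral_iterated_integral_norm2_le[OF partition pl_t pl_w _ meas]) auto
    also have "\<dots> = ennreal (C * h ^ (2 * ?nt + ?n))"
      by (simp add: C_def power_add power_mult_distrib mult_ac)
    finally show ?case .
  qed
qed

theorem lemma3p4:
  fixes M :: "'a measure"
    and gt :: "real \<Rightarrow> 'a \<Rightarrow> real \<Rightarrow> real"
    and gw :: "real \<Rightarrow> 'a \<Rightarrow> real \<Rightarrow> real^'d::finite"
    and r :: "real \<Rightarrow> nat \<Rightarrow> real"
    and m :: nat
  assumes "prob_space M"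
    and m_pos: "m \<ge> 1"
    and verts: "\<And>h. h > 0 \<Longrightarrow> r h 0 = 0 \<and> r h m = 1 \<and> (\<forall>i<m. r h i < r h (Suc i))"
    and lin_t: "\<And>h x i s. h > 0 \<Longrightarrow> x \<in> space M \<Longrightarrow> i < m \<Longrightarrow> s \<in> {r h i .. r h (Suc i)} \<Longrightarrow>
          gt h x s = gt h x (r h i) + (s - r h i) / (r h (Suc i) - r h i) * (gt h x (r h (Suc i)) - gt h x (r h i))"
    and lin_w: "\<And>h x i s. h > 0 \<Longrightarrow> x \<in> space M \<Longrightarrow> i < m \<Longrightarrow> s \<in> {r h i .. r h (Suc i)} \<Longrightarrow>
          gw h x s = gw h x (r h i) + ((s - r h i) / (r h (Suc i) - r h i)) *\<^sub>R (gw h x (r h (Suc i)) - gw h x (r h i))"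
    and meas_t: "\<And>h s. h > 0 \<Longrightarrow> s \<in> {0..1} \<Longrightarrow> (\<lambda>x. gt h x s) \<in> borel_measurable M"
    and meas_w: "\<And>h s. h > 0 \<Longrightarrow> s \<in> {0..1} \<Longrightarrow> (\<lambda>x. gw h x s) \<in> borel_measurable M"
    and det_t: "\<And>h x y i. h > 0 \<Longrightarrow> x \<in> space M \<Longrightarrow> y \<in> space M \<Longrightarrow> i < m \<Longrightarrow>
          gt h x (r h (Suc i)) - gt h x (r h i) = gt h y (r h (Suc i)) - gt h y (r h i)"
    and scale_t: "\<And>i. i < m \<Longrightarrow> \<exists>C h0. h0 > 0 \<and> (\<forall>h x. 0 < h \<and> h < h0 \<and> x \<in> space M \<longrightarrow>
          \<bar>gt h x (r h (Suc i)) - gt h x (r h i)\<bar> \<le> C * h)"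
    and scale_w: "\<And>i j k. i < m \<Longrightarrow> \<exists>C h0. h0 > 0 \<and> (\<forall>h. 0 < h \<and> h < h0 \<longrightarrow>
          (\<integral>\<^sup>+ x. ennreal (\<bar>(gw h x (r h (Suc i)) - gw h x (r h i)) $ j\<bar> ^ (2 * k)) \<partial>M)
            \<le> ennreal (C * h ^ k))"
  shows "\<forall>\<alpha> :: letter list. \<exists>C h0. h0 > 0 \<and> (\<forall>h. 0 < h \<and> h < h0 \<longrightarrow>
          (\<integral>\<^sup>+ x. ennreal (iterated_integral_norm2 (gt h x) (gw h x) \<alpha>) \<partial>M)
            \<le> ennreal (C * h ^ (2 * count_tau \<alpha> + count_omega \<alpha>)))"
proof
  fix \<alpha> :: "letter list"
  let ?K = "(UNIV :: 'd set) \<times> {..<m}"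
  have partition: "partition01 (r h) m" if "0 < h" for h
    using verts[OF that] unfolding partition01_def by blast
  have pl_t: "piecewise_linear (r h) m (gt h x)" if "0 < h" "x \<in> space M" for h x
    unfolding piecewise_linear_def real_scaleR_def using lin_t[OF that] by blast
  have pl_w: "piecewise_linear (r h) m (gw h x)" if "0 < h" "x \<in> space M" for h x
    unfolding piecewise_linear_def using lin_w[OF that] by blast
  have meas: "(\<lambda>x. gw h x (r h i)) \<in> borel_measurable M" if "0 < h" "i \<le> m" for h i
    using meas_w[OF that(1) partition01_in_unit[OF partition[OF that(1)] that(2)]] .
  have "\<exists>C. \<forall>\<^sub>F h in at_right 0. \<forall>x\<in>space M. \<bar>gt h x (r h (Suc i)) - gt h x (r h i)\<bar> \<le> C * h"
    if "i \<in> {..<m}" for i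
    using scale_t[of i] that unfolding eventually_at_right_field by auto
  from eventually_at_right_0_uniform_linear_bound[OF finite_lessThan,
      where f = "\<lambda>i h x. \<bar>gt h x (r h (Suc i)) - gt h x (r h i)\<bar>", OF this]
  obtain CT where CT: "\<forall>\<^sub>F h in at_right 0. \<forall>i\<in>{..<m}. \<forall>x\<in>space M.
                         \<bar>gt h x (r h (Suc i)) - gt h x (r h i)\<bar> \<le> CT * h"
    by blast
  let ?moment = "\<lambda>p h. \<integral>\<^sup>+x. ennreal (\<bar>(gw h x (r h (Suc (snd p))) - gw h x (r h (snd p))) $ fst p\<bar>
                                     ^ (2 * count_omega \<alpha>)) \<partial>M"
  have "finite ?K"
    by (intro finite_cartesian_product) simp_all
  moreover have "\<exists>C. \<forall>\<^sub>F h in at_right 0. ?moment p h \<le> ennreal (C * h ^ count_omega \<alpha>)"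
    if "p \<in> ?K" for p
  proof -
    from that have "snd p < m"
      by auto
    from scale_w[OF this] show ?thesis
      unfolding eventually_at_right_field by blast
  qed
  ultimately obtain CW where "0 \<le> CW"
    and CW: "\<forall>\<^sub>F h in at_right 0. \<forall>p\<in>?K. ?moment p h \<le> ennreal (CW * h ^ count_omega \<alpha>)"
    using eventually_at_right_0_uniform_power_bound[where F = ?moment] by blast
  from eventually_nn_integral_iterated_integral_norm2_le[OF partition pl_t pl_w meas CT CW \<open>0 \<le> CW\<close>]
  show "\<exists>C h0. h0 > 0 \<and> (\<forall>h. 0 < h \<and> h < h0 \<longrightarrow>
          (\<integral>\<^sup>+ x. ennreal (iterated_integral_norm2 (gt h x) (gw h x) \<alpha>) \<partial>M)
            \<le> ennreal (C * h ^ (2 * count_tau \<alpha> + count_omega \<alpha>)))"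
    unfolding eventually_at_right_field by blast
qed

end
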